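(* Let $p\in[1,\infty]$. Let $\boldsymbol{\mu}_+\ne\boldsymbol{\mu}_-\in\mathbb{R}^d$, $\sigma>0$, and let $(\boldsymbol{X},Y)$ be random with $P(Y=+)=P(Y=-)=1/2$ and $\boldsymbol{X}\mid Y=i\sim N(\boldsymbol{\mu}_i,\sigma^2\boldsymbol{I}_d)$. Let $\boldsymbol{w}\in\mathbb{R}^d\setminus\{\boldsymbol{0}\}$, $b\in\mathbb{R}$, and let the linear classifier assign $\boldsymbol{x}$ to class $+$ iff $\boldsymbol{w}\cdot\boldsymbol{x}+b>0$. Let $\varepsilon>0$, $\delta\ge0$, $\boldsymbol{\mu}=\frac12(\boldsymbol{\mu}_+-\boldsymbol{\mu}_-)$, $\bar{\boldsymbol{\mu}}=\frac12(\boldsymbol{\mu}_++\boldsymbol{\mu}_-)$, $b'=\boldsymbol{w}\cdot\bar{\boldsymbol{\mu}}+b$, $\boldsymbol{\mu}_0=\boldsymbol{\mu}/\|\boldsymbol{\mu}\|_2$. Let $\boldsymbol{u}_p$ be a maximizer of $|\boldsymbol{w}\cdot\boldsymbol{v}|$ over $\{\boldsymbol{v}\in\mathbb{R}^d:\|\boldsymbol{v}\|_p\le\varepsilon,\ |\boldsymbol{v}\cdot\boldsymbol{\mu}_0|\le\delta\}$ chosen with $\boldsymbol{w}\cdot\boldsymbol{u}_p\ge0$. Let $p_m$ be the probability that $\boldsymbol{X}$ is misclassified and $p_{s-adv|p}$ the probability that $\boldsymbol{X}$ is correctly classified and there is $\boldsymbol{x}'$ with $\|\boldsymbol{X}-\boldsymbol{x}'\|_p\le\varepsilon$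 and $|(\boldsymbol{X}-\boldsymbol{x}')\cdot\boldsymbol{\mu}_0|\le\delta$ that is assigned a different class than $\boldsymbol{X}$. Then $$p_{s-adv|p}=1-p_m-\frac12\left[\Phi\!\left(\frac{\boldsymbol{w}\cdot\boldsymbol{\mu}+b'}{\|\boldsymbol{w}\|_2\sigma}-\frac{\boldsymbol{w}\cdot\boldsymbol{u}_p}{\|\boldsymbol{w}\|_2\sigma}\right)+\Phi\!\left(\frac{\boldsymbol{w}\cdot\boldsymbol{\mu}-b'}{\|\boldsymbol{w}\|_2\sigma}-\frac{\boldsymbol{w}\cdot\boldsymbol{u}_p}{\|\boldsymbol{w}\|_2\sigma}\right)\right].$$
   Context: $\Phi$ denotes the standard normal CDF. Since the feasible set is symmetric under $\boldsymbol{v}\mapsto-\boldsymbol{v}$, a maximizer with $\boldsymbol{w}\cdot\boldsymbol{u}_p\ge0$ exists, and then $\boldsymbol{w}\cdot\boldsymbol{u}_p$ is the maximum of $\boldsymbol{w}\cdot\boldsymbol{v}$ over the feasible set. *)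

theory Defs
  imports "HOL-Probability.Probability"
begin

definition Phi :: "real \<Rightarrow> real" where
  "Phi x = measure (density lborel (normal_density 0 1)) {..x}"

definition gauss_iso :: "real^'n \<Rightarrow> real \<Rightarrow> (real^'n) measure" where
  "gauss_iso m \<sigma> = density lborel (\<lambda>x. ennreal (\<Prod>i\<in>UNIV. normal_density (m$i) \<sigma> (x$i)))"

definition lp_norm :: "ereal \<Rightarrow> real^'n \<Rightarrow> real" where
  "lp_norm p v = (if p = \<infinity> then Max ((\<lambda>i. \<bar>v$i\<bar>) ` UNIV)
                  else (\<Sum>i\<in>UNIV. \<bar>v$i\<bar> powr real_of_ereal p) powr (1 / real_of_ereal p))"

text \<open>Linear classifier: class + (True) iff w.x + b > 0.\<close>
definition lin_cls :: "real^'n \<Rightarrow> real \<Rightarrow> real^'n \<Rightarrow> bool" where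
  "lin_cls w b x = (w \<bullet> x + b > 0)"

end

theory Submission
  imports Defs
begin

text \<open>Given the label, the score \<open>w \<bullet> X + b\<close> of an isotropic Gaussian is a sum of independent
  normal variables, hence normal with mean \<open>w \<bullet> m + b\<close> (\<open>m\<close> the class mean) and standard
  deviation \<open>norm w * \<sigma>\<close>. The admissible perturbations form a symmetric set on which
  \<open>w \<bullet> v\<close> ranges over \<open>[-c, c]\<close> with \<open>c = w \<bullet> u\<^sub>p\<close>, so a correctly classified point can be pushed across
  the decision boundary exactly when its score lies in \<open>(0, c]\<close> (class \<open>+\<close>) or in
  \<open>(-c, 0]\<close> (class \<open>-\<close>); the probabilities of these events are differences of values of
  \<open>\<Phi>\<close>.\<close>

lemma Basis_vec_eq_range_axis: "(Basis :: (real^'n) set) = range (\<lambda>i. axis i 1)"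
  by (auto simp: Basis_vec_def)

lemma prod_Basis_vec: "(\<Prod>b\<in>(Basis :: (real^'n) set). f b) = (\<Prod>i\<in>UNIV. f (axis i 1))"
proof -
  have "inj (\<lambda>i::'n. axis i (1::real))" by (auto simp: inj_def axis_eq_axis)
  then show ?thesis unfolding Basis_vec_eq_range_axis by (simp add: prod.reindex)
qed

lemma measurable_vec_lambda_PiM:
  assumes "\<And>i. sets (N i) = sets borel"
  shows "(\<lambda>f. \<chi> i. f i) \<in> PiM UNIV N \<rightarrow>\<^sub>M (borel :: (real^'n) measure)"
proof -
  have "(\<lambda>f. f j) \<in> borel_measurable (PiM UNIV N)" for j
    using measurable_component_singleton[of j UNIV N] measurable_cong_sets[OF refl assms[of j]]
    by blast
  then have "\<forall>b\<in>(Basis :: (real^'n) set). (\<lambda>f. (\<chi> i. f i) \<bullet> b) \<in> borel_measurable (PiM UNIV N)"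
    unfolding Basis_vec_eq_range_axis by (auto simp: inner_axis)
  then show ?thesis by (subst borel_measurable_euclidean_space) auto
qed

abbreviation normal_product :: "real^'n \<Rightarrow> real \<Rightarrow> ('n \<Rightarrow> real) measure" where
  "normal_product m \<sigma> \<equiv> PiM UNIV (\<lambda>i. density lborel (normal_density (m$i) \<sigma>))"

lemma product_prob_space_normal:
  "\<sigma> > 0 \<Longrightarrow> product_prob_space (\<lambda>i. density lborel (normal_density (\<mu> i) \<sigma>))"
  unfolding product_prob_space_def product_prob_space_axioms_def product_sigma_finite_def
  using prob_space_normal_density by (auto intro: prob_space_imp_sigma_finite)

lemma emeasure_gauss_iso_box:
  fixes m l u :: "real^'n"
  shows "emeasure (gauss_iso m \<sigma>) (box l u) =
    (\<Prod>i\<in>UNIV. emeasure (density lborel (normal_density (m$i) \<sigma>)) {l$i<..<u$i})"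
proof -
  define F where "F = (\<lambda>b t. ennreal (normal_density (m \<bullet> b) \<sigma> t) * indicator {l \<bullet> b<..<u \<bullet> b} t)"
  have factor: "ennreal (\<Prod>i\<in>UNIV. normal_density (m$i) \<sigma> (x$i)) * indicator (box l u) x =
      (\<Prod>b\<in>Basis. F b (x \<bullet> b))" for x :: "real^'n"
  proof (cases "x \<in> box l u")
    case True
    then show ?thesis by (simp add: prod_Basis_vec F_def inner_axis mem_box_cart prod_ennreal)
  next
    case False
    then obtain j where "\<not> (l$j < x$j \<and> x$j < u$j)" by (auto simp: mem_box_cart)
    then have "F (axis j 1) (x \<bullet> axis j 1) = 0" by (simp add: F_def inner_axis)
    then have "(\<Prod>b\<in>Basis. F b (x \<bullet> b)) = 0"
      unfolding prod_Basis_vec by (intro prod_zero) auto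
    with False show ?thesis by simp
  qed
  have "emeasure (gauss_iso m \<sigma>) (box l u) = \<integral>\<^sup>+x. (\<Prod>b\<in>Basis. F b (x \<bullet> b)) \<partial>lborel"
    unfolding gauss_iso_def by (subst emeasure_density) (auto simp: factor)
  also have "\<dots> = (\<Prod>b\<in>Basis. \<integral>\<^sup>+t. F b t \<partial>lborel)"
    by (rule nn_integral_lborel_prod) (auto simp: F_def)
  also have "\<dots> = (\<Prod>i\<in>UNIV. emeasure (density lborel (normal_density (m$i) \<sigma>)) {l$i<..<u$i})"
    by (simp add: prod_Basis_vec F_def inner_axis emeasure_density)
  finally show ?thesis .
qed

lemma emeasure_normal_product_box:
  fixes m l u :: "real^'n"
  assumes "\<sigma> > 0"
  shows "emeasure (distr (normal_product m \<sigma>) borel (\<lambda>f. \<chi> i. f i)) (box l u) =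
    (\<Prod>i\<in>UNIV. emeasure (density lborel (normal_density (m$i) \<sigma>)) {l$i<..<u$i})"
proof -
  interpret product_prob_space "\<lambda>i. density lborel (normal_density (m$i) \<sigma>)" UNIV
    using product_prob_space_normal[OF assms] .
  have "(\<lambda>f. \<chi> i. f i) -` box l u \<inter> space (normal_product m \<sigma>) = PiE UNIV (\<lambda>i. {l$i<..<u$i})"
    by (auto simp: space_PiM mem_box_cart PiE_iff)
  then show ?thesis
    by (simp add: emeasure_distr measurable_vec_lambda_PiM emeasure_PiM)
qed

lemma gauss_iso_eq_distr_normal_product:
  fixes m :: "real^'n"
  assumes "\<sigma> > 0"
  shows "gauss_iso m \<sigma> = distr (normal_product m \<sigma>) borel (\<lambda>f. \<chi> i. f i)"
proof (rule measure_eqI_generator_eq[where E="range (\<lambda>(a, b). box a b)" and \<Omega>=UNIV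
      and A="\<lambda>n. box (- (real n *\<^sub>R One)) (real n *\<^sub>R One)"])
  interpret product_prob_space "\<lambda>i. density lborel (normal_density (m$i) \<sigma>)" UNIV
    using product_prob_space_normal[OF assms] .
  interpret distr: prob_space "distr (normal_product m \<sigma>) borel (\<lambda>f. \<chi> i. f i)"
    by (rule prob_space_distr) (simp add: measurable_vec_lambda_PiM)
  have boxes: "emeasure (gauss_iso m \<sigma>) (box l u) =
      emeasure (distr (normal_product m \<sigma>) borel (\<lambda>f. \<chi> i. f i)) (box l u)" for l u :: "real^'n"
    unfolding emeasure_gauss_iso_box emeasure_normal_product_box[OF assms] ..
  show "Int_stable (range (\<lambda>(a, b). box a (b::real^'n)))"
    by (auto simp: Int_stable_def box_Int_box)
  show "range (\<lambda>(a, b). box a (b::real^'n)) \<subseteq> Pow UNIV" by auto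
  show "sets (gauss_iso m \<sigma>) = sigma_sets UNIV (range (\<lambda>(a, b). box a b))"
    by (simp add: gauss_iso_def borel_eq_box)
  show "sets (distr (normal_product m \<sigma>) borel (\<lambda>f. \<chi> i. f i)) =
      sigma_sets UNIV (range (\<lambda>(a, b). box a b))"
    by (simp add: borel_eq_box)
  show "range (\<lambda>n::nat. box (- (real n *\<^sub>R One)) (real n *\<^sub>R One)) \<subseteq>
      range (\<lambda>(a, b). box a (b::real^'n))"
    by auto
  show "(\<Union>n. box (- (real n *\<^sub>R One)) (real n *\<^sub>R One)) = (UNIV :: (real^'n) set)"
    by (rule UN_box_eq_UNIV)
  show "emeasure (gauss_iso m \<sigma>) (box (- (real n *\<^sub>R One)) (real n *\<^sub>R One)) \<noteq> \<infinity>" for n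
    using distr.emeasure_finite by (simp add: boxes)
  show "emeasure (gauss_iso m \<sigma>) X =
      emeasure (distr (normal_product m \<sigma>) borel (\<lambda>f. \<chi> i. f i)) X"
    if "X \<in> range (\<lambda>(a, b). box a b)" for X
    using that boxes by auto
qed

lemma indep_vars_normal_product:
  assumes "\<sigma> > 0"
  shows "prob_space.indep_vars (normal_product m \<sigma>)
    (\<lambda>i. density lborel (normal_density (m$i) \<sigma>)) (\<lambda>i f. f i) UNIV"
proof -
  interpret product_prob_space "\<lambda>i. density lborel (normal_density (m$i) \<sigma>)" UNIV
    using product_prob_space_normal[OF assms] .
  have "distr (normal_product m \<sigma>) (density lborel (normal_density (m$i) \<sigma>)) (\<lambda>f. f i) =
      density lborel (normal_density (m$i) \<sigma>)" for i
    by (rule distr_PiM_component) (auto simp: prob_space_normal_density[OF assms])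
  then have "distr (normal_product m \<sigma>) (normal_product m \<sigma>) (\<lambda>f. \<lambda>i\<in>UNIV. f i) =
      PiM UNIV (\<lambda>i. distr (normal_product m \<sigma>) (density lborel (normal_density (m$i) \<sigma>)) (\<lambda>f. f i))"
    by (simp add: restrict_def)
  then show ?thesis
    by (subst indep_vars_iff_distr_eq_PiM) auto
qed

lemma distributed_normal_product_coordinate:
  assumes "\<sigma> > 0"
  shows "distributed (normal_product m \<sigma>) lborel (\<lambda>f. f i) (normal_density (m$i) \<sigma>)"
proof -
  have "distr (normal_product m \<sigma>) lborel (\<lambda>f. f i) =
      distr (normal_product m \<sigma>) (density lborel (normal_density (m$i) \<sigma>)) (\<lambda>f. f i)"
    by (rule distr_cong) auto
  also have "\<dots> = density lborel (normal_density (m$i) \<sigma>)"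
    by (rule distr_PiM_component) (auto simp: prob_space_normal_density[OF assms])
  finally show ?thesis
    unfolding distributed_def
    using measurable_component_singleton[of i UNIV] measurable_cong_sets by auto
qed

text \<open>Only the coordinates with nonzero weight enter, since the library's sum of independent
  normals requires positive variances.\<close>
lemma distributed_inner_normal_product:
  fixes m w :: "real^'n"
  assumes "\<sigma> > 0" and "w \<noteq> 0"
  shows "distributed (normal_product m \<sigma>) lborel (\<lambda>f. w \<bullet> (\<chi> i. f i) + b)
    (normal_density (w \<bullet> m + b) (norm w * \<sigma>))"
proof -
  interpret product_prob_space "\<lambda>i. density lborel (normal_density (m$i) \<sigma>)" UNIV
    using product_prob_space_normal[OF assms(1)] .
  define I where "I = {i. w$i \<noteq> 0}"
  have "I \<noteq> {}" using \<open>w \<noteq> 0\<close> by (auto simp: I_def vec_eq_iff)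
  have "indep_vars (\<lambda>_. borel) (\<lambda>i. (\<lambda>t. w$i * t) \<circ> (\<lambda>f. f i)) UNIV"
    by (rule indep_vars_compose[OF indep_vars_normal_product[OF assms(1)]]) simp
  then have "indep_vars (\<lambda>_. borel) (\<lambda>i f. w$i * f i) UNIV"
    by (simp add: o_def)
  then have indep: "indep_vars (\<lambda>_. borel) (\<lambda>i f. w$i * f i) I"
    by (rule indep_vars_subset) simp
  have "distributed (normal_product m \<sigma>) lborel (\<lambda>f. w$i * f i) (normal_density (w$i * m$i) (\<bar>w$i\<bar> * \<sigma>))"
    if "i \<in> I" for i
    using normal_density_affine[OF distributed_normal_product_coordinate[OF assms(1)], of "w$i" 0]
      that assms(1) by (simp add: I_def)
  then have sum: "distributed (normal_product m \<sigma>) lborel (\<lambda>f. \<Sum>i\<in>I. w$i * f i)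
      (normal_density (\<Sum>i\<in>I. w$i * m$i) (sqrt (\<Sum>i\<in>I. (\<bar>w$i\<bar> * \<sigma>)\<^sup>2)))"
    using assms(1) \<open>I \<noteq> {}\<close> by (intro sum_indep_normal[OF _ _ indep]) (auto simp: I_def)
  have inner: "w \<bullet> (\<chi> i. f i) = (\<Sum>i\<in>I. w$i * f i)" for f
    unfolding inner_vec_def inner_real_def vec_lambda_beta
    by (rule sum.mono_neutral_right) (auto simp: I_def)
  have "(\<Sum>i\<in>I. (\<bar>w$i\<bar> * \<sigma>)\<^sup>2) = (\<Sum>i\<in>UNIV. (w$i)\<^sup>2) * \<sigma>\<^sup>2"
    unfolding sum_distrib_right power_mult_distrib power2_abs
    by (rule sum.mono_neutral_left) (auto simp: I_def)
  then have sd: "sqrt (\<Sum>i\<in>I. (\<bar>w$i\<bar> * \<sigma>)\<^sup>2) = norm w * \<sigma>"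
    using assms(1) by (simp add: norm_vec_def L2_set_def real_sqrt_mult)
  have mean: "(\<Sum>i\<in>I. w$i * m$i) = w \<bullet> m"
    unfolding inner_vec_def inner_real_def by (rule sum.mono_neutral_left) (auto simp: I_def)
  have "0 < norm w * \<sigma>"
    using assms by simp
  from normal_density_affine[OF sum[unfolded sd mean] this, of 1 b]
  show ?thesis
    unfolding inner by (simp add: add.commute)
qed

lemma measure_gauss_iso_affine_vimage:
  fixes m w :: "real^'n"
  assumes "\<sigma> > 0" and "w \<noteq> 0" and "A \<in> sets borel"
  shows "measure (gauss_iso m \<sigma>) ((\<lambda>x. w \<bullet> x + b) -` A) =
    measure (density lborel (normal_density (w \<bullet> m + b) (norm w * \<sigma>))) A"
proof -
  have vec: "(\<lambda>f. \<chi> i. f i) \<in> normal_product m \<sigma> \<rightarrow>\<^sub>M (borel :: (real^'n) measure)"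
    by (simp add: measurable_vec_lambda_PiM)
  have "distr (gauss_iso m \<sigma>) lborel (\<lambda>x. w \<bullet> x + b) =
      distr (normal_product m \<sigma>) lborel (\<lambda>f. w \<bullet> (\<chi> i. f i) + b)"
    unfolding gauss_iso_eq_distr_normal_product[OF assms(1)]
    by (subst distr_distr) (auto simp: vec o_def)
  also have "\<dots> = density lborel (normal_density (w \<bullet> m + b) (norm w * \<sigma>))"
    using distributed_inner_normal_product[OF assms(1,2)] by (simp add: distributed_def)
  moreover have "(\<lambda>x. w \<bullet> x + b) \<in> gauss_iso m \<sigma> \<rightarrow>\<^sub>M lborel"
    by (simp add: gauss_iso_def)
  ultimately show ?thesis
    using measure_distr[of "\<lambda>x. w \<bullet> x + b" "gauss_iso m \<sigma>" lborel A] assms(3)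
    by (simp add: gauss_iso_def)
qed

lemma measure_density_lborel_singleton:
  assumes "f \<in> borel_measurable borel"
  shows "measure (density lborel f) {x} = 0"
proof -
  have "AE y in lborel. y \<in> {x} \<longrightarrow> f y = 0"
    using AE_lborel_singleton[of x] by eventually_elim auto
  then have "{x} \<in> null_sets (density lborel f)"
    using assms by (subst null_sets_density_iff) auto
  then show ?thesis
    by (rule measure_eq_0_null_sets)
qed

lemma distributed_density_lborel_id:
  assumes "f \<in> borel_measurable borel"
  shows "distributed (density lborel f) lborel (\<lambda>x. x) f"
proof -
  have "distr (density lborel f) lborel (\<lambda>x. x) = distr (density lborel f) (density lborel f) (\<lambda>x. x)"
    by (rule distr_cong) auto
  with assms show ?thesis
    unfolding distributed_def by simp
qed

lemma measure_normal_atMost: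
  assumes "\<sigma> > 0"
  shows "measure (density lborel (normal_density \<mu> \<sigma>)) {..t} = Phi ((t - \<mu>) / \<sigma>)"
proof -
  let ?N = "density lborel (normal_density \<mu> \<sigma>)"
  interpret N: prob_space ?N by (rule prob_space_normal_density[OF assms])
  have "distributed ?N lborel (\<lambda>x. (x - \<mu>) / \<sigma>) (normal_density 0 1)"
    using N.normal_standard_normal_convert[OF assms, of "\<lambda>x. x" \<mu>]
      distributed_density_lborel_id[of "normal_density \<mu> \<sigma>"] by simp
  then have std: "distr ?N lborel (\<lambda>x. (x - \<mu>) / \<sigma>) = density lborel (normal_density 0 1)"
    and meas: "(\<lambda>x. (x - \<mu>) / \<sigma>) \<in> ?N \<rightarrow>\<^sub>M lborel"
    unfolding distributed_def by auto
  have "(\<lambda>x. (x - \<mu>) / \<sigma>) -` {..(t - \<mu>) / \<sigma>} \<inter> space ?N = {..t}"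
    using assms by (auto simp: divide_right_mono divide_le_cancel)
  then show ?thesis
    unfolding Phi_def std[symmetric] by (subst measure_distr[OF meas]) auto
qed

lemma Phi_minus: "Phi (- x) = 1 - Phi x"
proof -
  let ?N = "density lborel (normal_density 0 1)"
  interpret N: prob_space ?N by (rule prob_space_normal_density) simp
  have "distributed ?N lborel (\<lambda>x. x) (normal_density 0 1)"
    by (rule distributed_density_lborel_id) simp
  from N.normal_density_affine[OF this, of "-1" 0]
  have "distributed ?N lborel (\<lambda>x. - x) (normal_density 0 1)"
    by simp
  then have refl: "distr ?N lborel (\<lambda>x. - x) = ?N" and meas: "(\<lambda>x. - x) \<in> ?N \<rightarrow>\<^sub>M lborel"
    unfolding distributed_def by auto
  have "Phi (- x) = measure ?N ((\<lambda>x. - x) -` {..- x} \<inter> space ?N)"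
    unfolding Phi_def by (subst (1) refl[symmetric], subst measure_distr[OF meas]) auto
  also have "(\<lambda>x. - x) -` {..- x} \<inter> space ?N = UNIV - {..<x}" by auto
  also have "measure ?N (UNIV - {..<x}) = 1 - measure ?N {..<x}"
    using N.prob_compl[of "{..<x}"] by simp
  also have "measure ?N {..<x} = measure ?N {..x}"
  proof -
    have "measure ?N {x} = 0"
      by (rule measure_density_lborel_singleton) simp
    moreover have "{..x} = {..<x} \<union> {x}"
      by auto
    ultimately show ?thesis
      using N.finite_measure_Union[of "{..<x}" "{x}"] by simp
  qed
  finally show ?thesis unfolding Phi_def .
qed

lemma measure_normal_greaterThanAtMost:
  assumes "\<sigma> > 0" and "a \<le> b"
  shows "measure (density lborel (normal_density \<mu> \<sigma>)) {a<..b} =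
    Phi ((b - \<mu>) / \<sigma>) - Phi ((a - \<mu>) / \<sigma>)"
proof -
  interpret N: prob_space "density lborel (normal_density \<mu> \<sigma>)"
    by (rule prob_space_normal_density[OF assms(1)])
  have "{a<..b} = {..b} - {..a}" by auto
  with assms show ?thesis by (simp add: N.finite_measure_Diff measure_normal_atMost)
qed

lemma measure_normal_greaterThan:
  assumes "\<sigma> > 0"
  shows "measure (density lborel (normal_density \<mu> \<sigma>)) {a<..} = 1 - Phi ((a - \<mu>) / \<sigma>)"
proof -
  interpret N: prob_space "density lborel (normal_density \<mu> \<sigma>)"
    by (rule prob_space_normal_density[OF assms])
  have "{a<..} = UNIV - {..a}" by auto
  with assms show ?thesis using N.prob_compl[of "{..a}"] by (simp add: measure_normal_atMost)
qed

lemma lp_norm_uminus: "lp_norm p (- v) = lp_norm p v"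
  unfolding lp_norm_def by simp

lemma exists_flip_iff:
  fixes w u x :: "real^'n" and F :: "(real^'n) set"
  assumes "u \<in> F" and "\<And>v. v \<in> F \<Longrightarrow> - v \<in> F" and "\<And>v. v \<in> F \<Longrightarrow> \<bar>w \<bullet> v\<bar> \<le> w \<bullet> u"
  shows "(\<exists>x'. x - x' \<in> F \<and> lin_cls w b x' \<noteq> lin_cls w b x) \<longleftrightarrow>
    (if 0 < w \<bullet> x + b then w \<bullet> x + b \<le> w \<bullet> u else - (w \<bullet> u) < w \<bullet> x + b)"
proof (cases "0 < w \<bullet> x + b")
  case True
  have "w \<bullet> x + b \<le> w \<bullet> u" if "x - x' \<in> F" "\<not> 0 < w \<bullet> x' + b" for x'
    using assms(3)[OF that(1)] that(2) by (simp add: inner_diff_right abs_le_iff)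
  moreover have "\<not> 0 < w \<bullet> (x - u) + b" if "w \<bullet> x + b \<le> w \<bullet> u"
    using that by (simp add: inner_diff_right)
  ultimately show ?thesis
    using True assms(1) by (auto simp: lin_cls_def intro!: exI[of _ "x - u"])
next
  case False
  have "- (w \<bullet> u) < w \<bullet> x + b" if "x - x' \<in> F" "0 < w \<bullet> x' + b" for x'
    using assms(3)[OF that(1)] that(2) by (simp add: inner_diff_right abs_le_iff)
  moreover have "0 < w \<bullet> (x + u) + b" if "- (w \<bullet> u) < w \<bullet> x + b"
    using that by (simp add: inner_add_right)
  ultimately show ?thesis
    using False assms(1,2) by (auto simp: lin_cls_def intro!: exI[of _ "x + u"])
qed

locale gaussian_mixture = prob_space M
  for M :: "'a measure" +
  fixes X :: "'a \<Rightarrow> real^'n" and Y :: "'a \<Rightarrow> bool" and mu_p mu_m :: "real^'n" and \<sigma> :: real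
  assumes sigma_pos: "\<sigma> > 0"
    and X_measurable[measurable]: "X \<in> measurable M borel"
    and Y_measurable[measurable]: "Y \<in> measurable M (count_space UNIV)"
    and measure_pos: "\<And>A. A \<in> sets borel \<Longrightarrow>
      measure M {\<omega>\<in>space M. Y \<omega> \<and> X \<omega> \<in> A} = 1/2 * measure (gauss_iso mu_p \<sigma>) A"
    and measure_neg: "\<And>A. A \<in> sets borel \<Longrightarrow>
      measure M {\<omega>\<in>space M. \<not> Y \<omega> \<and> X \<omega> \<in> A} = 1/2 * measure (gauss_iso mu_m \<sigma>) A"
begin

lemma measure_score_events:
  assumes "w \<noteq> 0" and [measurable]: "I \<in> sets borel" "J \<in> sets borel"
  shows "measure M ({\<omega>\<in>space M. Y \<omega> \<and> w \<bullet> X \<omega> + b \<in> I} \<union>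
      {\<omega>\<in>space M. \<not> Y \<omega> \<and> w \<bullet> X \<omega> + b \<in> J}) =
    1/2 * measure (density lborel (normal_density (w \<bullet> mu_p + b) (norm w * \<sigma>))) I +
    1/2 * measure (density lborel (normal_density (w \<bullet> mu_m + b) (norm w * \<sigma>))) J"
proof -
  have "(\<lambda>x. w \<bullet> x + b) -` A \<in> sets borel" if "A \<in> sets borel" for A
    using measurable_sets[of "\<lambda>x. w \<bullet> x + b" borel borel A] that by simp
  then show ?thesis
    using measure_pos[of "(\<lambda>x. w \<bullet> x + b) -` I"] measure_neg[of "(\<lambda>x. w \<bullet> x + b) -` J"]
      measure_gauss_iso_affine_vimage[OF sigma_pos \<open>w \<noteq> 0\<close>]
    by (subst finite_measure_Union) auto
qed

lemma misclassification_prob: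
  assumes "w \<noteq> 0"
  shows "measure M {\<omega>\<in>space M. lin_cls w b (X \<omega>) \<noteq> Y \<omega>} =
    1/2 * Phi (- (w \<bullet> mu_p + b) / (norm w * \<sigma>)) +
    1/2 * (1 - Phi (- (w \<bullet> mu_m + b) / (norm w * \<sigma>)))"
proof -
  have events: "{\<omega>\<in>space M. lin_cls w b (X \<omega>) \<noteq> Y \<omega>} =
      {\<omega>\<in>space M. Y \<omega> \<and> w \<bullet> X \<omega> + b \<in> {..0}} \<union> {\<omega>\<in>space M. \<not> Y \<omega> \<and> w \<bullet> X \<omega> + b \<in> {0<..}}"
    by (auto simp: lin_cls_def)
  show ?thesis
    unfolding events by (subst measure_score_events[OF assms])
      (simp_all add: assms sigma_pos measure_normal_atMost measure_normal_greaterThan)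
qed

lemma flip_region_prob:
  assumes "w \<noteq> 0" and "c \<ge> 0"
  shows "measure M {\<omega>\<in>space M. lin_cls w b (X \<omega>) = Y \<omega> \<and>
      (if 0 < w \<bullet> X \<omega> + b then w \<bullet> X \<omega> + b \<le> c else - c < w \<bullet> X \<omega> + b)} =
    1/2 * (Phi ((c - (w \<bullet> mu_p + b)) / (norm w * \<sigma>)) - Phi (- (w \<bullet> mu_p + b) / (norm w * \<sigma>))) +
    1/2 * (Phi (- (w \<bullet> mu_m + b) / (norm w * \<sigma>)) - Phi ((- c - (w \<bullet> mu_m + b)) / (norm w * \<sigma>)))"
proof -
  have events: "{\<omega>\<in>space M. lin_cls w b (X \<omega>) = Y \<omega> \<and>
      (if 0 < w \<bullet> X \<omega> + b then w \<bullet> X \<omega> + b \<le> c else - c < w \<bullet> X \<omega> + b)} =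
      {\<omega>\<in>space M. Y \<omega> \<and> w \<bullet> X \<omega> + b \<in> {0<..c}} \<union> {\<omega>\<in>space M. \<not> Y \<omega> \<and> w \<bullet> X \<omega> + b \<in> {-c<..0}}"
    by (auto simp: lin_cls_def)
  show ?thesis
    unfolding events by (subst measure_score_events[OF assms(1)])
      (simp_all add: assms sigma_pos measure_normal_greaterThanAtMost)
qed

end

theorem theorem5:
  fixes M :: "'a measure" and X :: "'a \<Rightarrow> real^'n" and Y :: "'a \<Rightarrow> bool"
    and p :: ereal and mu_p mu_m w u :: "real^'n" and \<sigma> b \<epsilon> \<delta> :: real
  assumes "prob_space M"
    and "1 \<le> p"
    and "mu_p \<noteq> mu_m" and "\<sigma> > 0"
    and X_meas: "X \<in> measurable M borel" and Y_meas: "Y \<in> measurable M (count_space UNIV)"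
    and "measure M {\<omega>\<in>space M. Y \<omega>} = 1/2" and "measure M {\<omega>\<in>space M. \<not> Y \<omega>} = 1/2"
    and cond_pos: "\<And>A. A \<in> sets borel \<Longrightarrow>
        measure M {\<omega>\<in>space M. Y \<omega> \<and> X \<omega> \<in> A} = 1/2 * measure (gauss_iso mu_p \<sigma>) A"
    and cond_neg: "\<And>A. A \<in> sets borel \<Longrightarrow>
        measure M {\<omega>\<in>space M. \<not> Y \<omega> \<and> X \<omega> \<in> A} = 1/2 * measure (gauss_iso mu_m \<sigma>) A"
    and "w \<noteq> 0" and "\<epsilon> > 0" and "\<delta> \<ge> 0"
    and u_feas: "lp_norm p u \<le> \<epsilon>"
        "\<bar>u \<bullet> ((1/2) *\<^sub>R (mu_p - mu_m) /\<^sub>R norm ((1/2) *\<^sub>R (mu_p - mu_m)))\<bar> \<le> \<delta>"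
    and u_max: "\<And>v. lp_norm p v \<le> \<epsilon> \<Longrightarrow>
        \<bar>v \<bullet> ((1/2) *\<^sub>R (mu_p - mu_m) /\<^sub>R norm ((1/2) *\<^sub>R (mu_p - mu_m)))\<bar> \<le> \<delta> \<Longrightarrow>
        \<bar>w \<bullet> v\<bar> \<le> \<bar>w \<bullet> u\<bar>"
    and u_sign: "w \<bullet> u \<ge> 0"
  shows
    "let mu = (1/2) *\<^sub>R (mu_p - mu_m);
         mubar = (1/2) *\<^sub>R (mu_p + mu_m);
         b' = w \<bullet> mubar + b;
         mu0 = mu /\<^sub>R norm mu;
         pm = measure M {\<omega>\<in>space M. lin_cls w b (X \<omega>) \<noteq> Y \<omega>};
         psadv = measure M {\<omega>\<in>space M. lin_cls w b (X \<omega>) = Y \<omega> \<and>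
                   (\<exists>x'. lp_norm p (X \<omega> - x') \<le> \<epsilon> \<and> \<bar>(X \<omega> - x') \<bullet> mu0\<bar> \<le> \<delta> \<and>
                         lin_cls w b x' \<noteq> lin_cls w b (X \<omega>))}
     in psadv = 1 - pm - 1/2 * (Phi ((w \<bullet> mu + b') / (norm w * \<sigma>) - (w \<bullet> u) / (norm w * \<sigma>))
                              + Phi ((w \<bullet> mu - b') / (norm w * \<sigma>) - (w \<bullet> u) / (norm w * \<sigma>)))"
proof -
  interpret gaussian_mixture M X Y mu_p mu_m \<sigma>
    using assms(1,4) X_meas Y_meas cond_pos cond_neg
    by (simp add: gaussian_mixture_def gaussian_mixture_axioms_def)
  define mu0 where "mu0 = (1/2) *\<^sub>R (mu_p - mu_m) /\<^sub>R norm ((1/2) *\<^sub>R (mu_p - mu_m))"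
  define F where "F = {v. lp_norm p v \<le> \<epsilon> \<and> \<bar>v \<bullet> mu0\<bar> \<le> \<delta>}"
  have "(\<exists>x'. x - x' \<in> F \<and> lin_cls w b x' \<noteq> lin_cls w b x) \<longleftrightarrow>
      (if 0 < w \<bullet> x + b then w \<bullet> x + b \<le> w \<bullet> u else - (w \<bullet> u) < w \<bullet> x + b)" for x
    by (rule exists_flip_iff)
      (use u_feas u_max u_sign in \<open>auto simp: F_def mu0_def lp_norm_uminus\<close>)
  then have events: "{\<omega>\<in>space M. lin_cls w b (X \<omega>) = Y \<omega> \<and>
      (\<exists>x'. lp_norm p (X \<omega> - x') \<le> \<epsilon> \<and> \<bar>(X \<omega> - x') \<bullet> mu0\<bar> \<le> \<delta> \<and> lin_cls w b x' \<noteq> lin_cls w b (X \<omega>))} =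
    {\<omega>\<in>space M. lin_cls w b (X \<omega>) = Y \<omega> \<and>
      (if 0 < w \<bullet> X \<omega> + b then w \<bullet> X \<omega> + b \<le> w \<bullet> u else - (w \<bullet> u) < w \<bullet> X \<omega> + b)}"
    by (simp add: F_def conj_assoc)
  have "norm w * \<sigma> \<noteq> 0"
    using \<open>w \<noteq> 0\<close> \<open>\<sigma> > 0\<close> by simp
  then have arg_pos: "(w \<bullet> (1/2) *\<^sub>R (mu_p - mu_m) + (w \<bullet> (1/2) *\<^sub>R (mu_p + mu_m) + b)) / (norm w * \<sigma>)
        - w \<bullet> u / (norm w * \<sigma>) = - ((w \<bullet> u - (w \<bullet> mu_p + b)) / (norm w * \<sigma>))"
    and arg_neg: "(w \<bullet> (1/2) *\<^sub>R (mu_p - mu_m) - (w \<bullet> (1/2) *\<^sub>R (mu_p + mu_m) + b)) / (norm w * \<sigma>)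
        - w \<bullet> u / (norm w * \<sigma>) = (- (w \<bullet> u) - (w \<bullet> mu_m + b)) / (norm w * \<sigma>)"
    by (simp_all add: inner_diff_right inner_add_right field_simps)
  show ?thesis
    unfolding Let_def mu0_def[symmetric] events flip_region_prob[OF \<open>w \<noteq> 0\<close> u_sign]
      misclassification_prob[OF \<open>w \<noteq> 0\<close>] arg_pos arg_neg Phi_minus
    by (simp add: algebra_simps)
qed

end
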